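(* Let $\lambda\in\Lambda$. (1) Let $m\ge1$ and $z_0,z_1\in\mathbb C_p$ with $|z_0|=|z_1|=\rho_m$ and $|z_0-z_1|\le S$. Then $|Q_\lambda(z_0)-Q_\lambda(z_1)|\le\rho_{m-1}|z_0-z_1|$. (2) If $z_0,z_1\in\{z:|z-1|<1\}$, then $|Q_\lambda(z_0)-Q_\lambda(z_1)|=p\,|z_0-z_1|$.
   Context: Let $p$ be a prime, $\mathbb C_p$ with $p$-adic absolute value, $|p|=1/p$. $\Lambda=\{\lambda\in\mathbb C_p:|\lambda-1|<1\}$, $P_\lambda(z)=\frac{\lambda}{p}z^p+\left(1-\frac{\lambda}{p}\right)z^{p+1}$, $\rho=p^{-1/(p-1)}$; $S>0$ is defined by $pS^{p-1}=\rho$; the sequence $(\rho_n)_{n\ge0}$ is defined by $\rho_0=1$ and $p\rho_n^p=\rho_{n-1}$ for $n\ge1$. Fix $\hat r\in|\mathbb C_p^*|$, $\hat r>1$, $B=\{z:|z|\le\hat r\}$; $\mathcal H(B)$ is the ring of power series $\sum a_iz^i$ convergent on $B$ with norm $\|f\|_B=\sup_i|a_i|\hat r^{\,i}$. Fix $Q\in\mathcal H(B)$ with $\|Q\|_B<\rho$, $Q^*_\lambda=P_\lambda+Q$, and let $h(\lambda)$ be the unique fixed point of $Q^*_\lambda$ in $\{z:|z-1|\le|Q(1)|/p\}$. Define $Q_\lambda(z)=P_\lambda(z+h(\lambda)-1)+Q(z+h(\lambda)-1)+1-h(\lambda)$ for $z\in B$. *)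

theory Defs
  imports "HOL-Analysis.Analysis" "HOL-Computational_Algebra.Polynomial"
begin

text \<open>These properties characterise C_p up to isometric
  isomorphism (C_p is the completion of the algebraic closure of Q_p).\<close>
definition is_Cp :: "nat \<Rightarrow> ('a::field_char_0 \<Rightarrow> real) \<Rightarrow> bool" where
  "is_Cp p nv \<longleftrightarrow>
     (\<forall>x. nv x \<ge> 0) \<and> (\<forall>x. nv x = 0 \<longleftrightarrow> x = 0) \<and>
     (\<forall>x y. nv (x * y) = nv x * nv y) \<and>
     (\<forall>x y. nv (x + y) \<le> max (nv x) (nv y)) \<and>
     nv (of_nat p) = 1 / real p \<and>
     (\<forall>X::nat \<Rightarrow> 'a. (\<forall>e>0. \<exists>N. \<forall>m\<ge>N. \<forall>n\<ge>N. nv (X m - X n) < e) \<longrightarrow>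
        (\<exists>L. (\<lambda>n. nv (X n - L)) \<longlonglongrightarrow> 0)) \<and>
     (\<forall>q::'a poly. degree q > 0 \<longrightarrow> (\<exists>z. poly q z = 0)) \<and>
     (\<forall>x e. e > 0 \<longrightarrow> (\<exists>y. (\<exists>q::rat poly. q \<noteq> 0 \<and> poly (map_poly of_rat q) y = 0)
                              \<and> nv (x - y) < e))"

definition nv_sums :: "('a::field \<Rightarrow> real) \<Rightarrow> (nat \<Rightarrow> 'a) \<Rightarrow> 'a \<Rightarrow> bool" where
  "nv_sums nv f s \<longleftrightarrow> (\<lambda>n. nv ((\<Sum>i<n. f i) - s)) \<longlonglongrightarrow> 0"

definition pseries :: "('a::field \<Rightarrow> real) \<Rightarrow> (nat \<Rightarrow> 'a) \<Rightarrow> 'a \<Rightarrow> 'a" where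
  "pseries nv a z = (THE s. nv_sums nv (\<lambda>i. a i * z ^ i) s)"

text \<open>a lies in H(B), B the closed disc of radius r: the series converges on B,
  i.e. |a_i| r^i tends to 0 (non-archimedean setting).\<close>
definition in_HB :: "('a::field \<Rightarrow> real) \<Rightarrow> real \<Rightarrow> (nat \<Rightarrow> 'a) \<Rightarrow> bool" where
  "in_HB nv r a \<longleftrightarrow> (\<lambda>i. nv (a i) * r ^ i) \<longlonglongrightarrow> 0"

definition normB :: "('a::field \<Rightarrow> real) \<Rightarrow> real \<Rightarrow> (nat \<Rightarrow> 'a) \<Rightarrow> real" where
  "normB nv r a = (SUP i. nv (a i) * r ^ i)"

definition Pl :: "nat \<Rightarrow> 'a::field \<Rightarrow> 'a \<Rightarrow> 'a" where
  "Pl p l z = (l / of_nat p) * z ^ p + (1 - l / of_nat p) * z ^ (p + 1)"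

definition rho :: "nat \<Rightarrow> real" where
  "rho p = real p powr (- 1 / (real p - 1))"

text \<open>S > 0 with p S^(p-1) = rho.\<close>
definition Sc :: "nat \<Rightarrow> real" where
  "Sc p = (rho p / real p) powr (1 / (real p - 1))"

text \<open>rho_0 = 1, p rho_n^p = rho_(n-1).\<close>
fun rhon :: "nat \<Rightarrow> nat \<Rightarrow> real" where
  "rhon p 0 = 1"
| "rhon p (Suc n) = (rhon p n / real p) powr (1 / real p)"

definition hfix :: "nat \<Rightarrow> ('a::field \<Rightarrow> real) \<Rightarrow> (nat \<Rightarrow> 'a) \<Rightarrow> 'a \<Rightarrow> 'a" where
  "hfix p nv a l = (THE z. nv (z - 1) \<le> nv (pseries nv a 1) / real p \<and>
                          Pl p l z + pseries nv a z = z)"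

definition Qlam :: "nat \<Rightarrow> ('a::field \<Rightarrow> real) \<Rightarrow> (nat \<Rightarrow> 'a) \<Rightarrow> 'a \<Rightarrow> 'a \<Rightarrow> 'a" where
  "Qlam p nv a l z = (let h = hfix p nv a l in
      Pl p l (z + h - 1) + pseries nv a (z + h - 1) + 1 - h)"

end

(* Write Q* = P_lambda + Q and c = lambda/p, so that |c| = p and
     Q*(x) - Q*(y) = (x^(p+1) - y^(p+1)) + c ((x^p - y^p) - (x^(p+1) - y^(p+1))) + (Q(x) - Q(y)).
   Q_lambda is Q* conjugated by the translation z |-> z + h(lambda) - 1, so both parts are estimates
   of this difference at translated points.
   (1) For |x|, |y| <= rho_m the inner binomial coefficients of (y + (x - y))^p are divisible by p,
   and |x - y|^(p-1) <= S^(p-1) = rho/p controls the last one; hence |x^p - y^p| <= rho_m^p |x - y|,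
   and the factor |c| = p turns rho_m^p into rho_(m-1).
   (2) Near 1 the difference is slope (x - y) up to an error smaller than p |x - y|, where
   slope = P_lambda'(1) has absolute value p; so Q* multiplies distances exactly by p.  The same
   linearisation makes a simplified Newton iteration a contraction, which locates h(lambda) within
   |Q(1)|/p of 1, close enough for both estimates to survive the translation. *)
theory Submission
  imports Defs
begin

section \<open>The constants rho, S and rho_n\<close>

lemma rho_pos: "rho p > 0" if "p \<ge> 2"
  using that unfolding rho_def by simp

lemma rho_pow: "rho p ^ (p - 1) = 1 / real p" if "p \<ge> 2"
proof -
  have "rho p ^ (p - 1) = real p powr (real (p - 1) * (- 1 / (real p - 1)))"
    unfolding rho_def using that by (simp add: powr_power)
  also have "\<dots> = real p powr (- 1)"
    using that by (simp add: of_nat_diff)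
  finally show ?thesis by (simp add: powr_minus_divide)
qed

lemma rho_lt_1: "rho p < 1" if "p \<ge> 2"
proof (rule ccontr)
  assume "\<not> rho p < 1"
  then have "1 \<le> rho p ^ (p - 1)" by simp
  with rho_pow[OF that] that show False by simp
qed

lemma inverse_le_rho: "1 / real p \<le> rho p" if "p \<ge> 2"
proof -
  have "rho p ^ (p - 1) \<le> rho p ^ 1"
    by (rule power_decreasing) (use that rho_pos[OF that] rho_lt_1[OF that] in auto)
  then show ?thesis using rho_pow[OF that] by simp
qed

lemma Sc_pow: "Sc p ^ (p - 1) = rho p / real p" if "p \<ge> 2"
proof -
  have "Sc p ^ (p - 1) = (rho p / real p) powr (real (p - 1) * (1 / (real p - 1)))"
    unfolding Sc_def using that rho_pos[OF that] by (simp add: powr_power)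
  also have "\<dots> = rho p / real p"
    using that rho_pos[OF that] by (simp add: of_nat_diff)
  finally show ?thesis .
qed

lemma rhon_Suc_pow: "real p * rhon p (Suc n) ^ p = rhon p n" if "p \<ge> 2" "rhon p n > 0"
proof -
  have "rhon p (Suc n) ^ p = (rhon p n / real p) powr (real p * (1 / real p))"
    using that by (simp add: powr_power del: times_divide_eq_right)
  then show ?thesis using that by simp
qed

lemma rho_lt_rhon: "rho p < rhon p n" and rhon_le_1: "rhon p n \<le> 1" if "p \<ge> 2"
proof -
  have "rho p < rhon p n \<and> rhon p n \<le> 1"
  proof (induction n)
    case 0
    then show ?case using rho_lt_1[OF that] by simp
  next
    case (Suc n)
    have pow: "rhon p (Suc n) ^ p = rhon p n / real p"
      using rhon_Suc_pow[OF that] Suc rho_pos[OF that] that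
      by (simp add: field_simps del: rhon.simps)
    have "rho p ^ p = rho p * rho p ^ (p - 1)"
      using that by (simp flip: power_Suc)
    also have "\<dots> = rho p / real p" using rho_pow[OF that] by simp
    also have "\<dots> < rhon p (Suc n) ^ p"
      unfolding pow using Suc that by (simp add: divide_strict_right_mono)
    finally have "rho p < rhon p (Suc n)"
      by (rule power_less_imp_less_base) simp
    moreover have "rhon p (Suc n) ^ p \<le> 1"
      unfolding pow using Suc that by simp
    then have "rhon p (Suc n) \<le> 1"
      using that power_le_one_iff[of "rhon p (Suc n)" p] by simp
    ultimately show ?case by simp
  qed
  then show "rho p < rhon p n" "rhon p n \<le> 1" by simp_all
qed

section \<open>Non-archimedean absolute values\<close>

locale nonarch_abs =
  fixes nv :: "'a::field \<Rightarrow> real"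
  assumes nv_nonneg [simp]: "nv x \<ge> 0"
    and nv_eq_0_iff [simp]: "nv x = 0 \<longleftrightarrow> x = 0"
    and nv_mult: "nv (x * y) = nv x * nv y"
    and nv_add_le_max: "nv (x + y) \<le> max (nv x) (nv y)"
begin

lemma nv_0 [simp]: "nv 0 = 0"
  by simp

lemma nv_le_0_iff [simp]: "nv x \<le> 0 \<longleftrightarrow> x = 0"
  using nv_nonneg[of x] by (metis nv_eq_0_iff order_antisym)

lemma nv_gt_0_iff [simp]: "nv x > 0 \<longleftrightarrow> x \<noteq> 0"
  using nv_nonneg[of x] by (metis nv_eq_0_iff order_less_le)

lemma nv_1 [simp]: "nv 1 = 1"
  using nv_mult[of 1 1] by simp

lemma nv_minus [simp]: "nv (- x) = nv x"
proof -
  have "nv (- 1) * nv (- 1) = 1" using nv_mult[of "- 1" "- 1"] by simp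
  then have "nv (- 1) = 1"
    using nv_nonneg[of "- 1"] by (metis abs_of_nonneg abs_square_eq_1 power2_eq_square)
  then show ?thesis using nv_mult[of "- 1" x] by simp
qed

lemma nv_minus_commute: "nv (x - y) = nv (y - x)"
  by (metis minus_diff_eq nv_minus)

lemma nv_diff_le_max: "nv (x - y) \<le> max (nv x) (nv y)"
  using nv_add_le_max[of x "- y"] by simp

lemma nv_add_le: "nv x \<le> M \<Longrightarrow> nv y \<le> M \<Longrightarrow> nv (x + y) \<le> M"
  using nv_add_le_max[of x y] by simp

lemma nv_diff_le: "nv x \<le> M \<Longrightarrow> nv y \<le> M \<Longrightarrow> nv (x - y) \<le> M"
  using nv_diff_le_max[of x y] by simp

lemma nv_add_eq_right: "nv x < nv y \<Longrightarrow> nv (x + y) = nv y"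
  using nv_add_le_max[of x y] nv_diff_le_max[of "x + y" x] by auto

lemma nv_power: "nv (x ^ n) = nv x ^ n"
  by (induction n) (simp_all add: nv_mult)

lemma nv_divide: "nv (x / y) = nv x / nv y"
proof (cases "y = 0")
  case False
  then show ?thesis using nv_mult[of "x / y" y] by simp
qed simp

lemma nv_of_nat_le_1: "nv (of_nat n) \<le> 1"
  by (induction n) (simp_all add: nv_add_le)

lemma nv_sum_le: "(\<And>i. i \<in> A \<Longrightarrow> nv (f i) \<le> M) \<Longrightarrow> 0 \<le> M \<Longrightarrow> nv (sum f A) \<le> M"
  by (induction A rule: infinite_finite_induct) (auto intro: nv_add_le)

lemma nv_le_1_if_nv_diff_1_le_1: "nv (x - 1) \<le> 1 \<Longrightarrow> nv x \<le> 1"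
  using nv_add_le[of "x - 1" 1 1] by simp

lemma nv_eq_1_if_nv_diff_1_less_1: "nv (x - 1) < 1 \<Longrightarrow> nv x = 1"
  using nv_add_eq_right[of "x - 1" 1] by simp

lemma nv_power_diff_le:
  assumes "nv x \<le> R" "nv y \<le> R"
  shows "nv (x ^ Suc n - y ^ Suc n) \<le> R ^ n * nv (x - y)"
proof (induction n)
  case (Suc n)
  have "R \<ge> 0" using assms(1) nv_nonneg order_trans by blast
  have "nv (x * (x ^ Suc n - y ^ Suc n)) \<le> R * (R ^ n * nv (x - y))"
    unfolding nv_mult by (rule mult_mono) (use assms Suc \<open>R \<ge> 0\<close> in auto)
  moreover have "nv (y ^ Suc n * (x - y)) \<le> R ^ Suc n * nv (x - y)"
    unfolding nv_mult nv_power by (rule mult_right_mono, rule power_mono) (use assms in auto)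
  moreover have "x ^ Suc (Suc n) - y ^ Suc (Suc n) = x * (x ^ Suc n - y ^ Suc n) + y ^ Suc n * (x - y)"
    by (simp add: algebra_simps)
  ultimately show ?case by (auto intro: nv_add_le)
qed simp

lemma nv_power_diff_le_nv_diff: "nv x \<le> 1 \<Longrightarrow> nv y \<le> 1 \<Longrightarrow> nv (x ^ n - y ^ n) \<le> nv (x - y)"
  using nv_power_diff_le[of x 1 y "n - 1"] by (cases n) simp_all

end

locale complete_nonarch_abs = nonarch_abs +
  assumes complete: "(\<forall>e>0. \<exists>N. \<forall>m\<ge>N. \<forall>n\<ge>N. nv (X m - X n) < e) \<Longrightarrow>
    \<exists>L. (\<lambda>n. nv (X n - L)) \<longlonglongrightarrow> 0"
begin

lemma nv_limit_unique:
  assumes "(\<lambda>n. nv (X n - s)) \<longlonglongrightarrow> 0" "(\<lambda>n. nv (X n - t)) \<longlonglongrightarrow> 0"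
  shows "s = t"
proof -
  have "nv (s - t) \<le> max (nv (X n - s)) (nv (X n - t))" for n
    using nv_diff_le_max[of "X n - t" "X n - s"] by (simp add: max.commute)
  moreover have "(\<lambda>n. max (nv (X n - s)) (nv (X n - t))) \<longlonglongrightarrow> 0"
    using tendsto_max[OF assms] by simp
  ultimately have "nv (s - t) \<le> 0" by (intro LIMSEQ_le_const) auto
  then show ?thesis by simp
qed

lemma nv_limit_le:
  assumes "(\<lambda>n. nv (X n - s)) \<longlonglongrightarrow> 0" "\<And>n. nv (X n) \<le> M"
  shows "nv s \<le> M"
proof -
  have "nv s \<le> max M (nv (X n - s))" for n
    using nv_diff_le_max[of "X n" "X n - s"] assms(2)[of n] by auto
  moreover have "(\<lambda>n. max M (nv (X n - s))) \<longlonglongrightarrow> max M 0"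
    by (intro tendsto_max tendsto_const assms(1))
  ultimately have "nv s \<le> max M 0" by (intro LIMSEQ_le_const) auto
  then show ?thesis using assms(2)[of 0] nv_nonneg[of "X 0"] by linarith
qed

lemma convergent_if_steps_tendsto_0:
  assumes steps: "(\<lambda>n. nv (X (Suc n) - X n)) \<longlonglongrightarrow> 0"
  shows "\<exists>L. (\<lambda>n. nv (X n - L)) \<longlonglongrightarrow> 0"
proof (rule complete, intro allI impI)
  fix e :: real
  assume "e > 0"
  then obtain N where N: "\<And>n. n \<ge> N \<Longrightarrow> nv (X (Suc n) - X n) < e"
    using order_tendstoD(2)[OF steps] by (auto simp: eventually_sequentially)
  have close: "nv (X (n + j) - X n) < e" if "n \<ge> N" for n j
  proof (induction j)
    case (Suc j)
    have "X (n + Suc j) - X n = (X (Suc (n + j)) - X (n + j)) + (X (n + j) - X n)" by simp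
    then have "nv (X (n + Suc j) - X n) \<le> max (nv (X (Suc (n + j)) - X (n + j))) (nv (X (n + j) - X n))"
      by (metis nv_add_le_max)
    also have "\<dots> < e" using N[of "n + j"] Suc that by simp
    finally show ?case .
  qed (use \<open>e > 0\<close> in simp)
  show "\<exists>N. \<forall>m\<ge>N. \<forall>n\<ge>N. nv (X m - X n) < e"
  proof (intro exI allI impI)
    fix m n assume "m \<ge> N" "n \<ge> N"
    then show "nv (X m - X n) < e"
      using close[of n "m - n"] close[of m "n - m"] nv_minus_commute[of "X m" "X n"]
      by (cases "m \<ge> n") simp_all
  qed
qed

lemma nv_sums_unique: "nv_sums nv f s \<Longrightarrow> nv_sums nv f t \<Longrightarrow> s = t"
  unfolding nv_sums_def by (rule nv_limit_unique)

lemma nv_sums_pseries: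
  assumes "(\<lambda>i. nv (a i * z ^ i)) \<longlonglongrightarrow> 0"
  shows "nv_sums nv (\<lambda>i. a i * z ^ i) (pseries nv a z)"
proof -
  obtain s where "nv_sums nv (\<lambda>i. a i * z ^ i) s"
    using convergent_if_steps_tendsto_0[of "\<lambda>n. \<Sum>i<n. a i * z ^ i"] assms
    unfolding nv_sums_def by auto
  then show ?thesis
    unfolding pseries_def by (metis nv_sums_unique theI)
qed

lemma nv_sums_diff:
  assumes f: "nv_sums nv f s" and g: "nv_sums nv g t"
  shows "nv_sums nv (\<lambda>i. f i - g i) (s - t)"
  unfolding nv_sums_def
proof (rule tendsto_sandwich[of "\<lambda>_. 0" _ _ "\<lambda>n. max (nv (sum f {..<n} - s)) (nv (sum g {..<n} - t))"])
  have "(\<Sum>i<n. f i - g i) - (s - t) = (sum f {..<n} - s) - (sum g {..<n} - t)" for n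
    by (simp add: sum_subtractf)
  then show "\<forall>\<^sub>F n in sequentially. nv ((\<Sum>i<n. f i - g i) - (s - t))
      \<le> max (nv (sum f {..<n} - s)) (nv (sum g {..<n} - t))"
    by (simp only: nv_diff_le_max) simp
  show "(\<lambda>n. max (nv (sum f {..<n} - s)) (nv (sum g {..<n} - t))) \<longlonglongrightarrow> 0"
    using tendsto_max[OF f[unfolded nv_sums_def] g[unfolded nv_sums_def]] by simp
qed auto

lemma nv_sums_le:
  assumes "nv_sums nv f s" "\<And>i. nv (f i) \<le> M"
  shows "nv s \<le> M"
proof (rule nv_limit_le)
  show "(\<lambda>n. nv (sum f {..<n} - s)) \<longlonglongrightarrow> 0"
    using assms(1) unfolding nv_sums_def .
  have "0 \<le> M"
    by (meson assms(2) nv_nonneg order_trans)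
  then show "nv (sum f {..<n}) \<le> M" for n
    by (intro nv_sum_le assms(2))
qed

text \<open>Banach's fixed point theorem on a closed ball; by the ultrametric inequality the ball is
  invariant as soon as its centre moves by at most its radius.\<close>
lemma contraction_fixpoint:
  assumes centre: "nv (T z0 - z0) \<le> r"
    and contr: "\<And>u v. nv (u - z0) \<le> r \<Longrightarrow> nv (v - z0) \<le> r \<Longrightarrow> nv (T u - T v) \<le> k * nv (u - v)"
    and "0 \<le> k" "k < 1"
  shows "\<exists>z. nv (z - z0) \<le> r \<and> T z = z"
proof -
  define X where "X n = (T ^^ n) z0" for n
  have X_Suc: "X (Suc n) = T (X n)" for n
    unfolding X_def by simp
  have "0 \<le> r"
    using centre nv_nonneg order_trans by blast
  have invariant: "nv (T u - z0) \<le> r" if "nv (u - z0) \<le> r" for u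
  proof -
    have "nv (T u - T z0) \<le> k * nv (u - z0)"
      using contr[OF that] \<open>0 \<le> r\<close> by simp
    also have "\<dots> \<le> 1 * r"
      by (rule mult_mono) (use that \<open>0 \<le> r\<close> \<open>k < 1\<close> in auto)
    finally have "nv (T u - T z0) \<le> r" by simp
    from nv_add_le[OF this centre] show ?thesis by simp
  qed
  have X_ball: "nv (X n - z0) \<le> r" for n
  proof (induction n)
    case (Suc n)
    then show ?case using invariant by (simp add: X_Suc)
  qed (simp add: X_def \<open>0 \<le> r\<close>)
  have steps: "nv (X (Suc n) - X n) \<le> k ^ n * r" for n
  proof (induction n)
    case (Suc n)
    have "nv (X (Suc (Suc n)) - X (Suc n)) \<le> k * nv (X (Suc n) - X n)"
      unfolding X_Suc[of "Suc n"] X_Suc[of n] by (rule contr) (simp_all only: X_ball flip: X_Suc)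
    also have "\<dots> \<le> k ^ Suc n * r" using mult_left_mono[OF Suc \<open>0 \<le> k\<close>] by (simp add: mult.assoc)
    finally show ?case .
  qed (simp add: X_def centre)
  have "(\<lambda>n. k ^ n * r) \<longlonglongrightarrow> 0"
    by (intro tendsto_mult_left_zero LIMSEQ_realpow_zero) (use assms in auto)
  then have "(\<lambda>n. nv (X (Suc n) - X n)) \<longlonglongrightarrow> 0"
    by (rule tendsto_sandwich[rotated 2, OF tendsto_const]) (use steps in simp_all)
  then obtain z where lim: "(\<lambda>n. nv (X n - z)) \<longlonglongrightarrow> 0"
    using convergent_if_steps_tendsto_0 by blast
  have z_ball: "nv (z - z0) \<le> r"
    using nv_limit_le[of "\<lambda>n. X n - z0" "z - z0"] lim X_ball by simp
  have "nv (T z - z) \<le> k * nv (X n - z) + nv (X (Suc n) - z)" for n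
  proof -
    have "T z - z = (T z - T (X n)) + (X (Suc n) - z)"
      by (simp add: X_Suc)
    then have "nv (T z - z) \<le> max (nv (T z - T (X n))) (nv (X (Suc n) - z))"
      by (metis nv_add_le_max)
    also have "\<dots> \<le> nv (T z - T (X n)) + nv (X (Suc n) - z)"
      by (simp add: max_def)
    finally have "nv (T z - z) \<le> nv (T z - T (X n)) + nv (X (Suc n) - z)" .
    moreover have "nv (T z - T (X n)) \<le> k * nv (X n - z)"
      using contr[OF z_ball X_ball[of n]] nv_minus_commute[of z "X n"] by simp
    ultimately show ?thesis by linarith
  qed
  moreover have "(\<lambda>n. k * nv (X n - z) + nv (X (Suc n) - z)) \<longlonglongrightarrow> 0"
    using tendsto_add[OF tendsto_mult_right_zero[OF lim] LIMSEQ_Suc[OF lim]] by simp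
  ultimately have "nv (T z - z) \<le> 0" by (intro LIMSEQ_le_const) auto
  then show ?thesis using z_ball by auto
qed

end

locale Cp_abs =
  fixes p :: nat and nv :: "'a::field_char_0 \<Rightarrow> real"
  assumes prime_p: "prime p" and is_Cp: "is_Cp p nv"

lemma complete_nonarch_abs_if_is_Cp: "is_Cp p nv \<Longrightarrow> complete_nonarch_abs nv"
  unfolding is_Cp_def complete_nonarch_abs_def nonarch_abs_def complete_nonarch_abs_axioms_def
  by (elim conjE) (intro conjI; assumption)

sublocale Cp_abs \<subseteq> complete_nonarch_abs nv
  using is_Cp by (rule complete_nonarch_abs_if_is_Cp)

context Cp_abs
begin

lemma p_ge_2: "p \<ge> 2"
  using prime_p prime_ge_2_nat by blast

lemma nv_of_nat_p: "nv (of_nat p) = 1 / real p"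
  using is_Cp unfolding is_Cp_def by (elim conjE)

lemma nv_binomial_prime_le: "nv (of_nat (p choose j)) \<le> 1 / real p" if "0 < j" "j < p"
proof -
  have "p dvd (p choose j)"
    by (rule dvd_choose_prime) (use that prime_p in auto)
  then obtain q where q: "p choose j = p * q" by (elim dvdE)
  have "nv (of_nat (p choose j)) = 1 / real p * nv (of_nat q)"
    unfolding q by (simp add: nv_mult nv_of_nat_p)
  also have "\<dots> \<le> 1 / real p"
    using nv_of_nat_le_1[of q] by (simp add: divide_le_eq)
  finally show ?thesis .
qed

lemma nv_power_prime_diff_le:
  assumes y: "nv y \<le> R" and d: "nv (x - y) \<le> R"
  shows "nv (x ^ p - y ^ p) \<le> max (nv (x - y) ^ p) (R ^ (p - 1) * nv (x - y) / real p)"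
    (is "_ \<le> ?M")
proof -
  define d where "d = x - y"
  define g where "g j = of_nat (p choose j) * d ^ j * y ^ (p - j)" for j
  have "x ^ p = (\<Sum>j\<le>p. g j)"
    unfolding g_def using binomial_ring[of d y p] by (simp add: d_def)
  also have "\<dots> = y ^ p + (\<Sum>j\<in>{1..p}. g j)"
    by (simp add: atMost_atLeast0 sum.atLeast_Suc_atMost g_def)
  finally have expand: "x ^ p - y ^ p = (\<Sum>j\<in>{1..p}. g j)" by simp
  have "R \<ge> 0" using y nv_nonneg order_trans by blast
  have terms: "nv (g j) \<le> ?M" if j: "j \<in> {1..p}" for j
  proof (cases "j = p")
    case True
    then show ?thesis by (simp add: g_def d_def nv_mult nv_power)
  next
    case False
    then obtain i where i: "j = Suc i" "Suc i < p" using j by (cases j) auto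
    have "nv (g j) = nv (of_nat (p choose j) :: 'a) * (nv d * nv d ^ i) * nv y ^ (p - j)"
      by (simp add: g_def nv_mult nv_power i)
    also have "\<dots> \<le> 1 / real p * (nv d * R ^ i) * R ^ (p - j)"
      using nv_binomial_prime_le[of j] i d y \<open>R \<ge> 0\<close>
      by (intro mult_mono power_mono mult_left_mono) (simp_all add: d_def)
    also have "\<dots> = R ^ (p - 1) * nv d / real p"
      using i by (simp add: mult.assoc flip: power_add)
    finally show ?thesis unfolding d_def by linarith
  qed
  have "0 \<le> ?M" by (simp add: le_max_iff_disj)
  then show ?thesis
    unfolding expand using terms by (rule nv_sum_le[rotated])
qed

end

section \<open>The maps Q* and Q_lambda\<close>

lemma Pl_diff:
  "Pl p l x - Pl p l y = (x ^ (p + 1) - y ^ (p + 1))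
     + l / of_nat p * ((x ^ p - y ^ p) - (x ^ (p + 1) - y ^ (p + 1)))"
proof -
  define c where "c = l / of_nat p"
  show ?thesis unfolding Pl_def c_def[symmetric] by (simp add: algebra_simps)
qed

lemma Pl_diff_linear:
  "Pl p l x - Pl p l y - (of_nat p + 1 - l / of_nat p) * (x - y)
    = ((x ^ (p + 1) - y ^ (p + 1)) - of_nat (p + 1) * (x - y))
      - l / of_nat p * ((x ^ p - 1) * (x - y) + (y - 1) * (x ^ p - y ^ p))"
proof -
  define c where "c = l / of_nat p"
  show ?thesis unfolding Pl_def c_def[symmetric] power_add power_one_right
    by (simp add: algebra_simps)
qed

lemma newton_step_diff:
  fixes D :: "'a::field"
  assumes "D \<noteq> 0"
  shows "(u - (A - u) / D) - (v - (B - v) / D) = - ((A - B) - (D + 1) * (u - v)) / D"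
  using assms by (simp add: field_simps)

locale Qlam_setting = Cp_abs p nv for p and nv :: "'a::field_char_0 \<Rightarrow> real" +
  fixes a :: "nat \<Rightarrow> 'a" and rhat :: real and l :: 'a
  assumes rhat_gt_1: "rhat > 1"
    and a_in_HB: "in_HB nv rhat a"
    and normB_less_rho: "normB nv rhat a < rho p"
    and l_near_1: "nv (l - 1) < 1"
begin

abbreviation Q :: "'a \<Rightarrow> 'a" where
  "Q \<equiv> pseries nv a"

definition Qstar :: "'a \<Rightarrow> 'a" where
  "Qstar z = Pl p l z + Q z"

lemma coeff_le_normB: "nv (a i) * rhat ^ i \<le> normB nv rhat a"
proof -
  have "convergent (\<lambda>i. nv (a i) * rhat ^ i)"
    using a_in_HB unfolding in_HB_def by (rule convergentI)
  then have "bdd_above (range (\<lambda>i. nv (a i) * rhat ^ i))"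
    by (intro Bseq_bdd_above convergent_imp_Bseq)
  then show ?thesis
    unfolding normB_def by (rule cSUP_upper[rotated]) simp
qed

lemma normB_nonneg: "normB nv rhat a \<ge> 0"
proof -
  have "nv (a 0) \<le> normB nv rhat a"
    using coeff_le_normB[of 0] by simp
  then show ?thesis by (rule order_trans[OF nv_nonneg])
qed

lemma normB_less_1: "normB nv rhat a < 1"
  using normB_less_rho rho_lt_1[OF p_ge_2] by linarith

lemma pseries_sums:
  assumes "nv z \<le> rhat"
  shows "nv_sums nv (\<lambda>i. a i * z ^ i) (Q z)"
proof (rule nv_sums_pseries, rule tendsto_sandwich[OF _ _ tendsto_const])
  show "(\<lambda>i. nv (a i) * rhat ^ i) \<longlonglongrightarrow> 0"
    using a_in_HB unfolding in_HB_def .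
  have "nv (a i * z ^ i) \<le> nv (a i) * rhat ^ i" for i
    unfolding nv_mult nv_power by (intro mult_left_mono power_mono) (use assms in auto)
  then show "\<forall>\<^sub>F i in sequentially. nv (a i * z ^ i) \<le> nv (a i) * rhat ^ i"
    by simp
qed simp

lemma nv_pseries_le:
  assumes "nv z \<le> rhat"
  shows "nv (Q z) \<le> normB nv rhat a"
proof (rule nv_sums_le[OF pseries_sums[OF assms]])
  fix i
  have "nv (a i * z ^ i) \<le> nv (a i) * rhat ^ i"
    unfolding nv_mult nv_power by (intro mult_left_mono power_mono) (use assms in auto)
  then show "nv (a i * z ^ i) \<le> normB nv rhat a"
    using coeff_le_normB[of i] by linarith
qed

lemma nv_pseries_diff_le:
  assumes x: "nv x \<le> rhat" and y: "nv y \<le> rhat"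
  shows "nv (Q x - Q y) \<le> normB nv rhat a * nv (x - y)"
proof (rule nv_sums_le[OF nv_sums_diff[OF pseries_sums[OF x] pseries_sums[OF y]]])
  fix i
  show "nv (a i * x ^ i - a i * y ^ i) \<le> normB nv rhat a * nv (x - y)"
  proof (cases i)
    case (Suc k)
    have "nv (a i * x ^ i - a i * y ^ i) = nv (a i) * nv (x ^ Suc k - y ^ Suc k)"
      by (simp add: Suc nv_mult flip: right_diff_distrib)
    also have "\<dots> \<le> nv (a i) * (rhat ^ k * nv (x - y))"
      by (intro mult_left_mono nv_power_diff_le x y) simp
    also have "\<dots> \<le> nv (a i) * (rhat ^ i * nv (x - y))"
      using power_increasing[of k i rhat] rhat_gt_1 by (intro mult_left_mono mult_right_mono) (simp_all add: Suc)
    also have "\<dots> \<le> normB nv rhat a * nv (x - y)"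
      unfolding mult.assoc[symmetric] by (intro mult_right_mono coeff_le_normB) simp
    finally show ?thesis .
  qed (simp add: normB_nonneg)
qed

lemma nv_l: "nv l = 1"
  using l_near_1 by (rule nv_eq_1_if_nv_diff_1_less_1)

lemma nv_l_div_p: "nv (l / of_nat p) = real p"
  using p_ge_2 by (simp add: nv_divide nv_l nv_of_nat_p)

lemma nv_Qstar_diff_le:
  assumes x: "nv x \<le> R" and y: "nv y \<le> R" and R: "1 / real p \<le> R" "R \<le> 1"
    and d: "nv (x - y) ^ (p - 1) \<le> R ^ p"
    and normB: "normB nv rhat a \<le> real p * R ^ p"
  shows "nv (Qstar x - Qstar y) \<le> real p * R ^ p * nv (x - y)"
proof -
  let ?d = "nv (x - y)" and ?A = "x ^ (p + 1) - y ^ (p + 1)" and ?B = "x ^ p - y ^ p"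
  have "0 \<le> R" by (rule order_trans[OF _ R(1)]) simp
  have "real p \<ge> 1" using p_ge_2 by simp
  then have bound_le_M: "R ^ p * ?d \<le> real p * R ^ p * ?d"
    using mult_right_mono[of 1 "real p" "R ^ p * ?d"] \<open>0 \<le> R\<close> by (simp add: mult.assoc)
  have A: "nv ?A \<le> R ^ p * ?d"
    using nv_power_diff_le[OF x y, of p] by simp
  have B: "nv ?B \<le> R ^ p * ?d"
  proof -
    have max_bound: "nv ?B \<le> max (?d ^ p) (R ^ (p - 1) * ?d / real p)"
      by (rule nv_power_prime_diff_le[OF y]) (use x y in \<open>simp add: nv_diff_le\<close>)
    obtain j where j: "p = Suc j" using p_ge_2 by (cases p) auto
    have "?d ^ p \<le> R ^ p * ?d"
      using mult_right_mono[OF d nv_nonneg[of "x - y"]] by (simp add: j mult.commute)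
    moreover have "R ^ (p - 1) * ?d / real p \<le> R ^ p * ?d"
    proof -
      have "R ^ (p - 1) * (1 / real p) \<le> R ^ (p - 1) * R"
        by (rule mult_left_mono[OF R(1)]) (use \<open>0 \<le> R\<close> in simp)
      then have "R ^ (p - 1) / real p \<le> R ^ p"
        by (simp add: j mult.commute)
      from mult_right_mono[OF this nv_nonneg[of "x - y"]] show ?thesis
        by (simp add: mult.commute)
    qed
    ultimately show ?thesis using max_bound by simp
  qed
  have "nv (l / of_nat p * (?B - ?A)) \<le> real p * R ^ p * ?d"
    unfolding nv_mult nv_l_div_p mult.assoc by (rule mult_left_mono) (use A B nv_diff_le in auto)
  moreover have "nv ?A \<le> real p * R ^ p * ?d"
    using A bound_le_M by linarith
  moreover have "nv (Q x - Q y) \<le> real p * R ^ p * ?d"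
  proof -
    have "nv (Q x - Q y) \<le> normB nv rhat a * ?d"
      by (rule nv_pseries_diff_le) (use x y R rhat_gt_1 in auto)
    also have "\<dots> \<le> real p * R ^ p * ?d"
      by (rule mult_right_mono[OF normB]) simp
    finally show ?thesis .
  qed
  moreover have "Qstar x - Qstar y = (?A + l / of_nat p * (?B - ?A)) + (Q x - Q y)"
    unfolding Qstar_def using Pl_diff[of p l x y] by (simp add: algebra_simps)
  ultimately show ?thesis by (simp add: nv_add_le)
qed

text \<open>The derivative of Pl p l at 1.\<close>
definition slope :: 'a where
  "slope = of_nat p + 1 - l / of_nat p"

lemma nv_of_nat_minus_l_div_p: "nv (of_nat n - l / of_nat p) = real p"
proof -
  have "nv (of_nat n :: 'a) < nv (- (l / of_nat p))"
    using nv_of_nat_le_1[of n] p_ge_2 by (simp add: nv_l_div_p)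
  then show ?thesis
    using nv_add_eq_right nv_l_div_p by fastforce
qed

lemma nv_slope: "nv slope = real p"
  unfolding slope_def using nv_of_nat_minus_l_div_p[of "p + 1"] by (simp add: add.commute)

lemma nv_slope_minus_1: "nv (slope - 1) = real p"
  unfolding slope_def using nv_of_nat_minus_l_div_p[of p] by simp

lemma nv_Qstar_diff_linear_le:
  assumes x: "nv (x - 1) \<le> t" and y: "nv (y - 1) \<le> t" and "t \<le> 1"
  shows "nv (Qstar x - Qstar y - slope * (x - y)) \<le> max 1 (real p * t) * nv (x - y)"
    (is "_ \<le> ?K")
proof -
  let ?d = "nv (x - y)"
  have x1: "nv x \<le> 1" and y1: "nv y \<le> 1"
    using x y \<open>t \<le> 1\<close> by (simp_all add: nv_le_1_if_nv_diff_1_le_1)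
  have d_le_K: "?d \<le> ?K"
    using mult_right_mono[OF max.cobounded1 nv_nonneg[of "x - y"], of 1] by simp
  have pt_le_K: "real p * t * ?d \<le> ?K"
    using mult_right_mono[OF max.cobounded2 nv_nonneg[of "x - y"], of "real p * t" 1] by simp
  have "nv ((x ^ (p + 1) - y ^ (p + 1)) - of_nat (p + 1) * (x - y)) \<le> ?K"
  proof (rule nv_diff_le)
    show "nv (x ^ (p + 1) - y ^ (p + 1)) \<le> ?K"
      using nv_power_diff_le_nv_diff[OF x1 y1] d_le_K order_trans by blast
    show "nv (of_nat (p + 1) * (x - y)) \<le> ?K"
      using mult_right_mono[OF nv_of_nat_le_1[of "p + 1"] nv_nonneg[of "x - y"]] d_le_K
      by (simp add: nv_mult)
  qed
  moreover have "nv (l / of_nat p * ((x ^ p - 1) * (x - y) + (y - 1) * (x ^ p - y ^ p))) \<le> ?K"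
  proof -
    have "nv (x ^ p - 1 ^ p) \<le> t"
      using nv_power_diff_le_nv_diff[OF x1, of 1 p] x by simp
    then have "nv ((x ^ p - 1) * (x - y)) \<le> t * ?d"
      by (simp add: nv_mult mult_right_mono)
    moreover have "nv ((y - 1) * (x ^ p - y ^ p)) \<le> t * ?d"
      unfolding nv_mult using y nv_power_diff_le_nv_diff[OF x1 y1] order_trans[OF nv_nonneg y]
      by (intro mult_mono) auto
    ultimately have "nv ((x ^ p - 1) * (x - y) + (y - 1) * (x ^ p - y ^ p)) \<le> t * ?d"
      by (rule nv_add_le)
    then have "real p * nv ((x ^ p - 1) * (x - y) + (y - 1) * (x ^ p - y ^ p)) \<le> real p * t * ?d"
      unfolding mult.assoc by (rule mult_left_mono) simp
    then show ?thesis
      using pt_le_K by (simp only: nv_mult nv_l_div_p)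
  qed
  moreover have "nv (Q x - Q y) \<le> ?K"
  proof -
    have "nv (Q x - Q y) \<le> normB nv rhat a * ?d"
      by (rule nv_pseries_diff_le) (use x1 y1 rhat_gt_1 in auto)
    also have "\<dots> \<le> ?d"
      using normB_less_1 by (simp add: mult_left_le_one_le normB_nonneg)
    finally show ?thesis using d_le_K by linarith
  qed
  moreover have "Qstar x - Qstar y - slope * (x - y)
    = (((x ^ (p + 1) - y ^ (p + 1)) - of_nat (p + 1) * (x - y))
      - l / of_nat p * ((x ^ p - 1) * (x - y) + (y - 1) * (x ^ p - y ^ p))) + (Q x - Q y)"
    using Pl_diff_linear[of p l x y] unfolding Qstar_def slope_def by (simp add: algebra_simps)
  ultimately show ?thesis by (simp add: nv_add_le nv_diff_le)
qed

lemma nv_Qstar_diff_eq: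
  assumes x: "nv (x - 1) < 1" and y: "nv (y - 1) < 1"
  shows "nv (Qstar x - Qstar y) = real p * nv (x - y)"
proof (cases "x = y")
  case False
  define t where "t = max (nv (x - 1)) (nv (y - 1))"
  have "t < 1" using x y by (simp add: t_def)
  have "real p * t < real p" "1 < real p"
    using \<open>t < 1\<close> p_ge_2 by simp_all
  then have "max 1 (real p * t) * nv (x - y) < real p * nv (x - y)"
    using False by (intro mult_strict_right_mono) auto
  moreover have "nv (Qstar x - Qstar y - slope * (x - y)) \<le> max 1 (real p * t) * nv (x - y)"
    using \<open>t < 1\<close> by (intro nv_Qstar_diff_linear_le) (simp_all add: t_def)
  ultimately have "nv (Qstar x - Qstar y - slope * (x - y)) < nv (slope * (x - y))"
    by (simp add: nv_mult nv_slope)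
  then show ?thesis
    using nv_add_eq_right by (fastforce simp: nv_mult nv_slope)
qed simp

lemma nv_Q1_less_1: "nv (Q 1) < 1"
  using nv_pseries_le[of 1] rhat_gt_1 normB_less_1 by simp

text \<open>The simplified Newton map with constant derivative slope is a 1/p-contraction on the disc
  around 1.\<close>
lemma Qstar_fixpoint_exists: "\<exists>h. nv (h - 1) \<le> nv (Q 1) / real p \<and> Qstar h = h"
proof -
  define T where "T w = w - (Qstar w - w) / (slope - 1)" for w
  have slope_ne_1: "slope - 1 \<noteq> 0"
    using nv_slope_minus_1 p_ge_2 by auto
  have "T 1 - 1 = - Q 1 / (slope - 1)"
    by (simp add: T_def Qstar_def Pl_def)
  then have centre: "nv (T 1 - 1) \<le> nv (Q 1) / real p"
    by (simp add: nv_divide nv_slope_minus_1)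
  have "nv (T u - T v) \<le> 1 / real p * nv (u - v)"
    if u: "nv (u - 1) \<le> nv (Q 1) / real p" and v: "nv (v - 1) \<le> nv (Q 1) / real p" for u v
  proof -
    have "nv (Q 1) / real p \<le> 1 / real p"
      using nv_Q1_less_1 by (simp add: divide_right_mono)
    then have "nv (Qstar u - Qstar v - slope * (u - v)) \<le> max 1 (real p * (1 / real p)) * nv (u - v)"
      using u v p_ge_2 by (intro nv_Qstar_diff_linear_le) auto
    moreover have "T u - T v = - (Qstar u - Qstar v - slope * (u - v)) / (slope - 1)"
      unfolding T_def using newton_step_diff[OF slope_ne_1] by simp
    then have "nv (T u - T v) = nv (Qstar u - Qstar v - slope * (u - v)) / real p"
      by (simp only: nv_divide nv_minus nv_slope_minus_1)
    ultimately show ?thesis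
      using p_ge_2 by (simp add: divide_right_mono)
  qed
  then obtain h where "nv (h - 1) \<le> nv (Q 1) / real p" "T h = h"
    using contraction_fixpoint[of T 1 "nv (Q 1) / real p" "1 / real p", OF centre] p_ge_2 by auto
  moreover from \<open>T h = h\<close> have "Qstar h = h"
    unfolding T_def using slope_ne_1 by simp
  ultimately show ?thesis by blast
qed

lemma nv_hfix_minus_1_le: "nv (hfix p nv a l - 1) \<le> nv (Q 1) / real p"
  and Qstar_hfix: "Qstar (hfix p nv a l) = hfix p nv a l"
proof -
  have unique: "h = h'" if "nv (h - 1) < 1" "Qstar h = h" "nv (h' - 1) < 1" "Qstar h' = h'" for h h'
    using nv_Qstar_diff_eq[of h h'] that p_ge_2 by simp
  have "nv (Q 1) / real p < 1"
    using nv_Q1_less_1 p_ge_2 by (simp add: divide_less_eq)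
  then have "\<exists>!h. nv (h - 1) \<le> nv (Q 1) / real p \<and> Qstar h = h"
    using Qstar_fixpoint_exists unique by (meson order_le_less_trans)
  from theI'[OF this] show "nv (hfix p nv a l - 1) \<le> nv (Q 1) / real p" "Qstar (hfix p nv a l) = hfix p nv a l"
    unfolding hfix_def Qstar_def by simp_all
qed

lemma nv_hfix_minus_1_less_rho: "nv (hfix p nv a l - 1) < rho p"
proof -
  have "nv (Q 1) / real p \<le> nv (Q 1)"
    using mult_left_mono[of 1 "real p" "nv (Q 1)"] p_ge_2 by (simp add: divide_le_eq)
  moreover have "nv (Q 1) < rho p"
    using nv_pseries_le[of 1] rhat_gt_1 normB_less_rho by simp
  ultimately show ?thesis using nv_hfix_minus_1_le by linarith
qed

lemma Qlam_diff:
  "Qlam p nv a l z0 - Qlam p nv a l z1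
    = Qstar (z0 + hfix p nv a l - 1) - Qstar (z1 + hfix p nv a l - 1)"
  unfolding Qlam_def Let_def Qstar_def by (simp add: algebra_simps)

lemma nv_Qlam_diff_le:
  assumes "m \<ge> 1" and z: "nv z0 = rhon p m" "nv z1 = rhon p m" and d: "nv (z0 - z1) \<le> Sc p"
  shows "nv (Qlam p nv a l z0 - Qlam p nv a l z1) \<le> rhon p (m - 1) * nv (z0 - z1)"
proof -
  obtain k where m: "m = Suc k" using \<open>m \<ge> 1\<close> by (cases m) auto
  define R where "R = rhon p m"
  have "rho p < R" "R \<le> 1" "rho p < rhon p k" "rho p > 0"
    unfolding R_def using rho_lt_rhon rhon_le_1 rho_pos p_ge_2 by auto
  have R_pow: "real p * R ^ p = rhon p k"
    unfolding R_def m using rhon_Suc_pow p_ge_2 \<open>rho p < rhon p k\<close> \<open>rho p > 0\<close> by simp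
  have shifted: "nv (z + hfix p nv a l - 1) \<le> R" if "nv z = R" for z
    using nv_add_le[of z R "hfix p nv a l - 1"] that nv_hfix_minus_1_less_rho \<open>rho p < R\<close>
    by (simp add: add_diff_eq)
  have "nv (z0 - z1) ^ (p - 1) \<le> Sc p ^ (p - 1)"
    using d by (simp add: power_mono)
  also have "\<dots> \<le> R ^ p"
  proof -
    have "real p * Sc p ^ (p - 1) \<le> real p * R ^ p"
      using Sc_pow[OF p_ge_2] p_ge_2 R_pow \<open>rho p < rhon p k\<close> by simp
    then show ?thesis using p_ge_2 by simp
  qed
  finally have "nv ((z0 + hfix p nv a l - 1) - (z1 + hfix p nv a l - 1)) ^ (p - 1) \<le> R ^ p"
    by simp
  moreover have "1 / real p \<le> R"
    using inverse_le_rho[OF p_ge_2] \<open>rho p < R\<close> by linarith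
  moreover have "normB nv rhat a \<le> real p * R ^ p"
    using normB_less_rho R_pow \<open>rho p < rhon p k\<close> by linarith
  ultimately have "nv (Qstar (z0 + hfix p nv a l - 1) - Qstar (z1 + hfix p nv a l - 1))
      \<le> real p * R ^ p * nv ((z0 + hfix p nv a l - 1) - (z1 + hfix p nv a l - 1))"
    using \<open>R \<le> 1\<close> by (intro nv_Qstar_diff_le shifted z[folded R_def])
  then show ?thesis
    unfolding Qlam_diff R_pow m by simp
qed

lemma nv_Qlam_diff_eq:
  assumes "nv (z0 - 1) < 1" "nv (z1 - 1) < 1"
  shows "nv (Qlam p nv a l z0 - Qlam p nv a l z1) = real p * nv (z0 - z1)"
proof -
  have "nv ((z + hfix p nv a l - 1) - 1) < 1" if "nv (z - 1) < 1" for z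
  proof -
    have "(z + hfix p nv a l - 1) - 1 = (z - 1) + (hfix p nv a l - 1)" by simp
    then have "nv ((z + hfix p nv a l - 1) - 1) \<le> max (nv (z - 1)) (nv (hfix p nv a l - 1))"
      by (metis nv_add_le_max)
    then show ?thesis
      using that nv_hfix_minus_1_less_rho rho_lt_1[OF p_ge_2] by simp
  qed
  then show ?thesis
    unfolding Qlam_diff using nv_Qstar_diff_eq assms by simp
qed

end

theorem lemma3p9:
  fixes p :: nat and nv :: "'a::field_char_0 \<Rightarrow> real" and a :: "nat \<Rightarrow> 'a"
    and rhat :: real and l :: 'a
  assumes "prime p"
    and "is_Cp p nv"
    and "\<exists>c. c \<noteq> 0 \<and> nv c = rhat" and "rhat > 1"
    and "in_HB nv rhat a" and "normB nv rhat a < rho p"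
    and "nv (l - 1) < 1"
  shows "(\<forall>m z0 z1. m \<ge> 1 \<longrightarrow> nv z0 = rhon p m \<longrightarrow> nv z1 = rhon p m \<longrightarrow>
            nv (z0 - z1) \<le> Sc p \<longrightarrow>
            nv (Qlam p nv a l z0 - Qlam p nv a l z1) \<le> rhon p (m - 1) * nv (z0 - z1))
      \<and> (\<forall>z0 z1. nv (z0 - 1) < 1 \<longrightarrow> nv (z1 - 1) < 1 \<longrightarrow>
            nv (Qlam p nv a l z0 - Qlam p nv a l z1) = real p * nv (z0 - z1))"
proof -
  interpret Qlam_setting p nv a rhat l
    by unfold_locales (use assms in auto)
  show ?thesis
    using nv_Qlam_diff_le nv_Qlam_diff_eq by blast
qed

end
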